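(* Let $n \ge 2$, $k \ge 1$ and $n_i, m_i \in \mathbb{Z}\setminus\{0\}$ for $1 \le i \le k$, and let $G$ be the group presented by $\mathcal{P}_n(n_1,\dots,n_k;m_1,\dots,m_k)$. Then: (i) if $N$ denotes the normal subgroup of $G$ generated by $xyxy^{-1}$, there is a group isomorphism $G/N \cong Q_{4n}$ sending $x \mapsto x$, $y \mapsto y$; (ii) the abelianisations satisfy $G^{\mathrm{ab}} \cong Q_{4n}^{\mathrm{ab}}$.
   Context: $Q_{4n} = \langle x, y \mid x^n y^{-2}, xyxy^{-1} \rangle$. With $n_{k+1} = 1 - \sum_{i=1}^k n_i$, $m_{k+1} = 1 - \sum_{i=1}^k m_i$, $\mathcal{P}_n(n_1,\dots,n_k;m_1,\dots,m_k) = \langle x, y \mid x^n y^{-2},\ x^{n_1} y x^{m_1} y^{-1} \cdots x^{n_{k+1}} y x^{m_{k+1}} y^{-1} \rangle$. *)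

theory Defs
  imports "HOL-Algebra.Algebra"
begin

(* Group presentations: letters are (inverted?, generator); words are lists of letters. *)
type_synonym 'a word = "(bool \<times> 'a) list"

definition inv_letter :: "bool \<times> 'a \<Rightarrow> bool \<times> 'a" where
  "inv_letter l = (\<not> fst l, snd l)"

definition pres_step :: "'a word set \<Rightarrow> ('a word \<times> 'a word) set" where
  "pres_step R = {(u @ [l, inv_letter l] @ v, u @ v) | u l v. True}
              \<union> {(u @ r @ v, u @ v) | u r v. r \<in> R}"

definition pres_eq :: "'a word set \<Rightarrow> ('a word \<times> 'a word) set" where
  "pres_eq R = (pres_step R \<union> (pres_step R)\<inverse>)\<^sup>*"

definition pres_word :: "'a word set \<Rightarrow> 'a word \<Rightarrow> 'a word set" where
  "pres_word R w = pres_eq R `` {w}"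

(* the group presented by all generators of type 'a and relators R *)
definition presented_group :: "'a word set \<Rightarrow> 'a word set monoid" where
  "presented_group R =
     \<lparr> carrier = UNIV // pres_eq R,
       monoid.mult = (\<lambda>A B. pres_word R ((SOME a. a \<in> A) @ (SOME b. b \<in> B))),
       monoid.one = pres_word R [] \<rparr>"

definition normal_closure :: "('a, 'b) monoid_scheme \<Rightarrow> 'a set \<Rightarrow> 'a set" where
  "normal_closure G S =
     generate G {g \<otimes>\<^bsub>G\<^esub> s \<otimes>\<^bsub>G\<^esub> inv\<^bsub>G\<^esub> g | g s. g \<in> carrier G \<and> s \<in> S}"

datatype gen = GX | GY

definition xw :: "gen word" where "xw = [(False, GX)]"
definition yw :: "gen word" where "yw = [(False, GY)]"
definition yinvw :: "gen word" where "yinvw = [(True, GY)]"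

definition pow_word :: "gen \<Rightarrow> int \<Rightarrow> gen word" where
  "pow_word a z = (if 0 \<le> z then replicate (nat z) (False, a) else replicate (nat (- z)) (True, a))"

(* relators of Q_{4n} = <x, y | x^n y^{-2}, x y x y^{-1}> *)
definition Q_rels :: "nat \<Rightarrow> gen word set" where
  "Q_rels n = {pow_word GX (int n) @ pow_word GY (-2), xw @ yw @ xw @ yinvw}"

definition P_rels :: "nat \<Rightarrow> int list \<Rightarrow> int list \<Rightarrow> gen word set" where
  "P_rels n ns ms =
     (let ns' = ns @ [1 - sum_list ns]; ms' = ms @ [1 - sum_list ms] in
      {pow_word GX (int n) @ pow_word GY (-2),
       concat (map (\<lambda>(a, b). pow_word GX a @ yw @ pow_word GX b @ yinvw) (zip ns' ms'))})"

end

theory Submission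
  imports Defs
begin

(* Write c = x y x y^-1.  If conjugation by y raises x to the power e, every block
   x^n_i y x^m_i y^-1 of the long relator equals x^(n_i + e m_i), so by the choice of n_(k+1)
   and m_(k+1) the whole relator equals x^(1 + e).  Modulo c we have e = -1, so the long
   relator becomes a consequence of c and adding c to P_n gives exactly the presentation of
   Q_4n: this is (i).  In an abelian group e = 1 and both the long relator and c equal x^2,
   so the two presentations have the same abelianisation: this is (ii). *)

section \<open>Presented groups\<close>

lemma pres_step_append_context:
  assumes "(u, v) \<in> pres_step R"
  shows "(p @ u @ q, p @ v @ q) \<in> pres_step R"
proof -
  from assms consider (cancel) a l b where "u = a @ [l, inv_letter l] @ b" "v = a @ b"
    | (relator) a r b where "u = a @ r @ b" "v = a @ b" "r \<in> R"
    unfolding pres_step_def by blast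
  then show ?thesis
  proof cases
    case cancel
    then have "(p @ u @ q, p @ v @ q) = ((p @ a) @ [l, inv_letter l] @ (b @ q), (p @ a) @ (b @ q))"
      by simp
    then show ?thesis unfolding pres_step_def by blast
  next
    case relator
    then have "(p @ u @ q, p @ v @ q) = ((p @ a) @ r @ (b @ q), (p @ a) @ (b @ q))"
      by simp
    then show ?thesis using relator(3) unfolding pres_step_def by blast
  qed
qed

lemma equiv_pres_eq: "equiv UNIV (pres_eq R)"
  unfolding pres_eq_def
  by (rule equivI) (auto simp: refl_rtrancl sym_rtrancl sym_Un_converse trans_rtrancl)

lemma pres_eq_refl [simp]: "(w, w) \<in> pres_eq R"
  unfolding pres_eq_def by simp

lemma pres_eq_trans: "(u, v) \<in> pres_eq R \<Longrightarrow> (v, w) \<in> pres_eq R \<Longrightarrow> (u, w) \<in> pres_eq R"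
  unfolding pres_eq_def by (rule rtrancl_trans)

lemma pres_eq_append_context:
  assumes "(u, v) \<in> pres_eq R"
  shows "(p @ u @ q, p @ v @ q) \<in> pres_eq R"
  using assms unfolding pres_eq_def
proof (induction rule: rtrancl_induct)
  case (step y z)
  then have "(p @ y @ q, p @ z @ q) \<in> pres_step R \<union> (pres_step R)\<inverse>"
    using pres_step_append_context by blast
  with step.IH show ?case by (rule rtrancl_into_rtrancl)
qed simp

lemma pres_eq_append:
  assumes "(u, u') \<in> pres_eq R" and "(v, v') \<in> pres_eq R"
  shows "(u @ v, u' @ v') \<in> pres_eq R"
proof -
  have "(u @ v, u' @ v) \<in> pres_eq R"
    using pres_eq_append_context[OF assms(1), of "[]" v] by simp
  moreover have "(u' @ v, u' @ v') \<in> pres_eq R"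
    using pres_eq_append_context[OF assms(2), of u' "[]"] by simp
  ultimately show ?thesis
    by (rule pres_eq_trans)
qed

lemma pres_word_eq_iff: "pres_word R u = pres_word R v \<longleftrightarrow> (u, v) \<in> pres_eq R"
  unfolding pres_word_def using eq_equiv_class_iff[OF equiv_pres_eq] by blast

lemma pres_eq_some_pres_word: "(w, SOME v. v \<in> pres_word R w) \<in> pres_eq R"
  using someI[of "\<lambda>v. v \<in> pres_word R w" w] by (simp add: pres_word_def)

lemma carrier_presented_group: "carrier (presented_group R) = range (pres_word R)"
  unfolding presented_group_def quotient_def pres_word_def by auto

lemma one_presented_group: "\<one>\<^bsub>presented_group R\<^esub> = pres_word R []"
  unfolding presented_group_def by simp

lemma pres_word_relator: "r \<in> R \<Longrightarrow> pres_word R r = \<one>\<^bsub>presented_group R\<^esub>"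
  unfolding one_presented_group pres_word_eq_iff pres_eq_def pres_step_def by force

lemma mult_presented_group:
  "pres_word R u \<otimes>\<^bsub>presented_group R\<^esub> pres_word R v = pres_word R (u @ v)"
proof -
  have "pres_word R (u @ v)
      = pres_word R ((SOME a. a \<in> pres_word R u) @ (SOME a. a \<in> pres_word R v))"
    unfolding pres_word_eq_iff by (rule pres_eq_append; rule pres_eq_some_pres_word)
  then show ?thesis
    unfolding presented_group_def by simp
qed

definition inv_word :: "'a word \<Rightarrow> 'a word" where
  "inv_word w = rev (map inv_letter w)"

lemma pres_eq_inv_word_append: "(inv_word w @ w, []) \<in> pres_eq R"
proof (induction w)
  case Nil
  then show ?case by (simp add: inv_word_def pres_eq_def)
next
  case (Cons l w)
  have "(inv_word w @ [inv_letter l, inv_letter (inv_letter l)] @ w, inv_word w @ w) \<in> pres_step R"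
    unfolding pres_step_def by blast
  then have "(inv_word (l # w) @ l # w, inv_word w @ w) \<in> pres_eq R"
    unfolding pres_eq_def inv_word_def by (auto simp: inv_letter_def)
  then show ?case
    using Cons.IH by (rule pres_eq_trans)
qed

lemma group_presented_group: "group (presented_group R)"
proof (rule groupI)
  fix x
  assume "x \<in> carrier (presented_group R)"
  then obtain w where w: "x = pres_word R w"
    by (auto simp: carrier_presented_group)
  have "pres_word R (inv_word w) \<otimes>\<^bsub>presented_group R\<^esub> x = \<one>\<^bsub>presented_group R\<^esub>"
    using pres_eq_inv_word_append[of w R]
    by (simp add: w mult_presented_group one_presented_group pres_word_eq_iff)
  then show "\<exists>y\<in>carrier (presented_group R). y \<otimes>\<^bsub>presented_group R\<^esub> x = \<one>\<^bsub>presented_group R\<^esub>"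
    by (auto simp: carrier_presented_group)
next
  fix x y z
  assume "x \<in> carrier (presented_group R)" "y \<in> carrier (presented_group R)"
    "z \<in> carrier (presented_group R)"
  then show "x \<otimes>\<^bsub>presented_group R\<^esub> y \<otimes>\<^bsub>presented_group R\<^esub> z
      = x \<otimes>\<^bsub>presented_group R\<^esub> (y \<otimes>\<^bsub>presented_group R\<^esub> z)"
    by (auto simp: carrier_presented_group mult_presented_group)
qed (auto simp: carrier_presented_group mult_presented_group one_presented_group)

definition pres_gen :: "'a word set \<Rightarrow> 'a \<Rightarrow> 'a word set" where
  "pres_gen R a = pres_word R [(False, a)]"

lemma pres_gen_in_carrier [simp]: "pres_gen R a \<in> carrier (presented_group R)"
  by (simp add: pres_gen_def carrier_presented_group)

lemma inv_pres_gen: "inv\<^bsub>presented_group R\<^esub> pres_gen R a = pres_word R [(True, a)]"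
proof -
  interpret group "presented_group R" by (rule group_presented_group)
  have "pres_word R [(True, a)] \<otimes>\<^bsub>presented_group R\<^esub> pres_gen R a = \<one>\<^bsub>presented_group R\<^esub>"
    using pres_eq_inv_word_append[of "[(False, a)]" R]
    by (simp add: pres_gen_def mult_presented_group one_presented_group pres_word_eq_iff
        inv_word_def inv_letter_def)
  then show ?thesis
    by (intro inv_equality) (auto simp: carrier_presented_group pres_gen_def)
qed

fun eval_word :: "('g, 'm) monoid_scheme \<Rightarrow> ('a \<Rightarrow> 'g) \<Rightarrow> 'a word \<Rightarrow> 'g" where
  "eval_word H f [] = \<one>\<^bsub>H\<^esub>"
| "eval_word H f (l # w) =
     (if fst l then inv\<^bsub>H\<^esub> f (snd l) else f (snd l)) \<otimes>\<^bsub>H\<^esub> eval_word H f w"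

context group
begin

lemma eval_word_closed: "(\<And>a. f a \<in> carrier G) \<Longrightarrow> eval_word G f w \<in> carrier G"
  by (induction w) auto

lemma eval_word_append:
  "(\<And>a. f a \<in> carrier G) \<Longrightarrow> eval_word G f (u @ v) = eval_word G f u \<otimes> eval_word G f v"
  by (induction u) (auto simp: eval_word_closed m_assoc)

lemma eval_word_pres_eq:
  assumes f: "\<And>a. f a \<in> carrier G" and rel: "\<And>r. r \<in> R \<Longrightarrow> eval_word G f r = \<one>"
    and "(u, v) \<in> pres_eq R"
  shows "eval_word G f u = eval_word G f v"
proof -
  have step: "eval_word G f u' = eval_word G f v'" if "(u', v') \<in> pres_step R" for u' v'
  proof -
    have cancel: "eval_word G f [l, inv_letter l] = \<one>" for l
      using f by (cases l) (auto simp: inv_letter_def)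
    from that consider a l b where "u' = a @ [l, inv_letter l] @ b" "v' = a @ b"
      | a r b where "u' = a @ r @ b" "v' = a @ b" "r \<in> R"
      unfolding pres_step_def by blast
    then show ?thesis
      by cases (simp_all only: eval_word_append[OF f] cancel rel, simp_all add: eval_word_closed f)
  qed
  from assms(3) show ?thesis
    unfolding pres_eq_def by (induction rule: rtrancl_induct) (auto dest: step)
qed

lemma eval_word_in_generate:
  "(\<And>a. f a \<in> carrier G) \<Longrightarrow> eval_word G f w \<in> generate G (range f)"
  by (induction w) (auto intro: generate.intros)

lemma eval_word_pow_word:
  assumes "f a \<in> carrier G"
  shows "eval_word G f (pow_word a z) = f a [^] z"
proof -
  have positive: "eval_word G f (replicate k (False, a)) = f a [^] k" for k
    using assms by (induction k) (simp_all, metis nat_pow_Suc nat_pow_Suc2)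
  have negative: "eval_word G f (replicate k (True, a)) = inv (f a [^] k)" for k
    using assms by (induction k) (simp_all add: inv_mult_group)
  show ?thesis
  proof (cases "0 \<le> z")
    case True
    then show ?thesis
      using positive[of "nat z"] pow_nat[OF True] by (simp add: pow_word_def)
  next
    case False
    then show ?thesis
      using negative[of "nat (- z)"] by (simp add: pow_word_def int_pow_neg[OF assms, symmetric])
  qed
qed

end

lemma (in group_hom) hom_eval_word:
  assumes "\<And>a. f a \<in> carrier G"
  shows "h (eval_word G f w) = eval_word H (h \<circ> f) w"
  using assms by (induction w) (simp_all add: G.eval_word_closed)

lemma eval_word_presented_group:
  "eval_word (presented_group R) (pres_gen R) w = pres_word R w"
proof (induction w)
  case Nil
  then show ?case by (simp add: one_presented_group)
next
  case (Cons l w)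
  obtain b a where l: "l = (b, a)"
    by fastforce
  have "pres_word R [l] = (if b then inv\<^bsub>presented_group R\<^esub> pres_gen R a else pres_gen R a)"
    by (cases b) (simp_all add: l inv_pres_gen, simp add: pres_gen_def)
  then have "eval_word (presented_group R) (pres_gen R) (l # w) = pres_word R [l] \<otimes>\<^bsub>presented_group R\<^esub> pres_word R w"
    using Cons.IH by (simp add: l)
  then show ?case
    by (simp add: mult_presented_group)
qed

lemma hom_presented_group_pres_word:
  assumes "group H" and "h \<in> hom (presented_group R) H"
  shows "h (pres_word R w) = eval_word H (\<lambda>a. h (pres_gen R a)) w"
proof -
  interpret group_hom "presented_group R" H h
    using assms group_presented_group by (auto simp: group_hom_def group_hom_axioms_def)
  show ?thesis
    using hom_eval_word[of "pres_gen R" w] by (simp add: eval_word_presented_group comp_def)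
qed

lemma carrier_presented_group_generate:
  "carrier (presented_group R) = generate (presented_group R) (range (pres_gen R))"
proof -
  interpret group "presented_group R" by (rule group_presented_group)
  have "pres_word R w \<in> generate (presented_group R) (range (pres_gen R))" for w
    using eval_word_in_generate[of "pres_gen R" w] by (simp add: eval_word_presented_group)
  then have "carrier (presented_group R) \<subseteq> generate (presented_group R) (range (pres_gen R))"
    by (auto simp: carrier_presented_group)
  moreover have "generate (presented_group R) (range (pres_gen R)) \<subseteq> carrier (presented_group R)"
    by (rule generate_incl) auto
  ultimately show ?thesis
    by (rule equalityI)
qed

lemma presented_group_universal:
  assumes "group H" and f: "\<And>a. f a \<in> carrier H"
    and rel: "\<And>r. r \<in> R \<Longrightarrow> eval_word H f r = \<one>\<^bsub>H\<^esub>"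
  obtains h where "h \<in> hom (presented_group R) H"
    and "\<And>w. h (pres_word R w) = eval_word H f w" and "\<And>a. h (pres_gen R a) = f a"
proof -
  interpret H: group H by fact
  define h where "h A = eval_word H f (SOME w. w \<in> A)" for A
  have h_word: "h (pres_word R w) = eval_word H f w" for w
    unfolding h_def by (rule H.eval_word_pres_eq[OF f rel pres_eq_some_pres_word, symmetric])
  have "h \<in> hom (presented_group R) H"
    by (rule homI)
      (auto simp: carrier_presented_group mult_presented_group h_word H.eval_word_closed[OF f]
        H.eval_word_append[OF f])
  moreover have "h (pres_gen R a) = f a" for a
    using f by (simp add: pres_gen_def h_word)
  ultimately show ?thesis
    using that h_word by blast
qed

section \<open>Quotients of presented groups\<close>

lemma hom_eq_on_generate:
  assumes "group G" and "group H" and "h \<in> hom G H" and "h' \<in> hom G H"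
    and S: "S \<subseteq> carrier G" and eq: "\<And>x. x \<in> S \<Longrightarrow> h x = h' x"
    and "g \<in> generate G S"
  shows "h g = h' g"
proof -
  interpret h: group_hom G H h
    using assms by (simp add: group_hom_def group_hom_axioms_def)
  interpret h': group_hom G H h'
    using assms by (simp add: group_hom_def group_hom_axioms_def)
  from \<open>g \<in> generate G S\<close> show ?thesis
  proof (induction rule: generate.induct)
    case (eng g1 g2)
    then have "g1 \<in> carrier G" "g2 \<in> carrier G"
      using h.G.generate_in_carrier[OF S] by auto
    with eng.IH show ?case
      by simp
  qed (use S eq in auto)
qed

lemma iso_if_inverse_on_generators:
  assumes A: "group A" and B: "group B" and \<alpha>: "\<alpha> \<in> hom A B" and \<beta>: "\<beta> \<in> hom B A"
    and gen_A: "carrier A = generate A S" and gen_B: "carrier B = generate B T"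
    and \<beta>\<alpha>: "\<And>x. x \<in> S \<Longrightarrow> \<beta> (\<alpha> x) = x" and \<alpha>\<beta>: "\<And>y. y \<in> T \<Longrightarrow> \<alpha> (\<beta> y) = y"
  shows "\<alpha> \<in> iso A B"
proof -
  have id_A: "id \<in> hom A A" and id_B: "id \<in> hom B B"
    using id_iso unfolding iso_def by blast+
  have S: "S \<subseteq> carrier A"
    unfolding gen_A by (auto intro: generate.incl)
  have T: "T \<subseteq> carrier B"
    unfolding gen_B by (auto intro: generate.incl)
  have "(\<beta> \<circ> \<alpha>) x = id x" if "x \<in> carrier A" for x
    by (rule hom_eq_on_generate[OF A A hom_compose[OF \<alpha> \<beta>] id_A S _ that[unfolded gen_A]])
      (simp add: \<beta>\<alpha>)
  moreover have "(\<alpha> \<circ> \<beta>) y = id y" if "y \<in> carrier B" for y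
    by (rule hom_eq_on_generate[OF B B hom_compose[OF \<beta> \<alpha>] id_B T _ that[unfolded gen_B]])
      (simp add: \<alpha>\<beta>)
  ultimately have "bij_betw \<alpha> (carrier A) (carrier B)"
    by (intro bij_betw_byWitness[where f'=\<beta>]) (use \<alpha> \<beta> hom_in_carrier in auto)
  with \<alpha> show ?thesis
    unfolding iso_def by blast
qed

lemma (in normal) carrier_FactGroup_generate:
  assumes gen: "carrier G = generate G S"
  shows "carrier (G Mod H) = generate (G Mod H) ((\<lambda>x. H #> x) ` S)"
proof -
  interpret \<pi>: group_hom G "G Mod H" "\<lambda>x. H #> x"
    by (intro group_hom.intro group_hom_axioms.intro is_group factorgroup_is_group r_coset_hom_Mod)
  have "S \<subseteq> carrier G"
    unfolding gen by (auto intro: generate.incl)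
  then have "generate (G Mod H) ((\<lambda>x. H #> x) ` S) = (\<lambda>x. H #> x) ` generate G S"
    by (rule \<pi>.generate_img)
  also have "\<dots> = carrier (G Mod H)"
    unfolding carrier_FactGroup gen ..
  finally show ?thesis ..
qed

lemma (in group) normal_closure_normal:
  assumes "S \<subseteq> carrier G"
  shows "normal_closure G S \<lhd> G"
  unfolding normal_closure_def
proof (rule normal_generateI)
  show "{g \<otimes> s \<otimes> inv g | g s. g \<in> carrier G \<and> s \<in> S} \<subseteq> carrier G"
    using assms by auto
next
  fix h g
  assume "h \<in> {g \<otimes> s \<otimes> inv g | g s. g \<in> carrier G \<and> s \<in> S}" and g: "g \<in> carrier G"
  then obtain g' s where gs: "g' \<in> carrier G" "s \<in> S" "h = g' \<otimes> s \<otimes> inv g'"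
    by auto
  then have "g \<otimes> h \<otimes> inv g = (g \<otimes> g') \<otimes> s \<otimes> inv (g \<otimes> g')"
    using g assms by (auto simp: m_assoc inv_mult_group)
  with gs g show "g \<otimes> h \<otimes> inv g \<in> {g \<otimes> s \<otimes> inv g | g s. g \<in> carrier G \<and> s \<in> S}"
    by blast
qed

lemma (in group) subset_normal_closure:
  assumes "S \<subseteq> carrier G"
  shows "S \<subseteq> normal_closure G S"
proof
  fix s
  assume "s \<in> S"
  with assms have "s = \<one> \<otimes> s \<otimes> inv \<one>"
    by auto
  with \<open>s \<in> S\<close> show "s \<in> normal_closure G S"
    unfolding normal_closure_def by (intro generate.incl) blast
qed

lemma (in group) normal_closure_minimal:
  assumes "K \<lhd> G" and "S \<subseteq> K"
  shows "normal_closure G S \<subseteq> K"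
proof -
  interpret K: normal K G by fact
  show ?thesis
    unfolding normal_closure_def
    by (rule generate_subgroup_incl[OF _ K.subgroup_axioms]) (use assms(2) K.inv_op_closed2 in auto)
qed

lemma (in group_hom) derived_subset_kernel:
  assumes "comm_group H"
  shows "derived G (carrier G) \<subseteq> kernel G H h"
proof -
  have "h ` derived G (carrier G) = derived H (h ` carrier G)"
    by (simp add: derived_img)
  also have "\<dots> = {\<one>\<^bsub>H\<^esub>}"
    by (rule comm_group.derived_eq_singleton[OF assms]) auto
  finally show ?thesis
    using G.derived_in_carrier[of "carrier G"] by (auto simp: kernel_def)
qed

abbreviation abelianization :: "('a, 'b) monoid_scheme \<Rightarrow> 'a set monoid" where
  "abelianization G \<equiv> G Mod derived G (carrier G)"

lemma eval_word_Mod_eq_one_iff: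
  assumes N: "N \<lhd> presented_group R"
  shows "eval_word (presented_group R Mod N) (\<lambda>a. N #>\<^bsub>presented_group R\<^esub> pres_gen R a) w
           = \<one>\<^bsub>presented_group R Mod N\<^esub>
         \<longleftrightarrow> pres_word R w \<in> N"
proof -
  interpret G: group "presented_group R" by (rule group_presented_group)
  interpret N: normal N "presented_group R" by (rule N)
  have "eval_word (presented_group R Mod N) (\<lambda>a. N #>\<^bsub>presented_group R\<^esub> pres_gen R a) w
      = N #>\<^bsub>presented_group R\<^esub> pres_word R w"
    using hom_presented_group_pres_word[OF N.factorgroup_is_group N.r_coset_hom_Mod] by simp
  moreover have "pres_word R w \<in> carrier (presented_group R)"
    by (simp add: carrier_presented_group)
  ultimately show ?thesis
    using G.coset_join1 N.subgroup_axioms N.rcos_const[OF G.is_group] by auto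
qed

lemma presented_group_normal_closure_universal:
  fixes R T :: "'a word set"
  defines "N \<equiv> normal_closure (presented_group R) (pres_word R ` T)"
  assumes "group H" and f: "\<And>a. f a \<in> carrier H"
    and rel: "\<And>r. r \<in> R \<union> T \<Longrightarrow> eval_word H f r = \<one>\<^bsub>H\<^esub>"
  obtains h where "h \<in> hom (presented_group R Mod N) H"
    and "\<And>a. h (N #>\<^bsub>presented_group R\<^esub> pres_gen R a) = f a"
proof -
  interpret G: group "presented_group R" by (rule group_presented_group)
  obtain \<psi> where \<psi>: "\<psi> \<in> hom (presented_group R) H"
    and \<psi>_word: "\<And>w. \<psi> (pres_word R w) = eval_word H f w"
    and \<psi>_gen: "\<And>a. \<psi> (pres_gen R a) = f a"
    by (rule presented_group_universal[of H f R]) (use \<open>group H\<close> f rel in auto)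
  interpret \<psi>: group_hom "presented_group R" H \<psi>
    using \<psi> \<open>group H\<close> by (simp add: group_hom_def group_hom_axioms_def G.is_group)
  have "pres_word R ` T \<subseteq> kernel (presented_group R) H \<psi>"
    using rel by (auto simp: kernel_def carrier_presented_group \<psi>_word)
  then have "N \<subseteq> kernel (presented_group R) H \<psi>"
    unfolding N_def by (rule G.normal_closure_minimal[OF \<psi>.normal_kernel])
  moreover have "N \<lhd> presented_group R"
    unfolding N_def by (rule G.normal_closure_normal) (auto simp: carrier_presented_group)
  ultimately obtain h where "h \<in> hom (presented_group R Mod N) H"
    and "\<And>g. g \<in> carrier (presented_group R) \<Longrightarrow> h (N #>\<^bsub>presented_group R\<^esub> g) = \<psi> g"
    using \<psi>.FactGroup_universal_kernel by blast
  with \<psi>_gen that show ?thesis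
    by simp
qed

lemma presented_group_abelianization_universal:
  assumes "comm_group H" and f: "\<And>a. f a \<in> carrier H"
    and rel: "\<And>r. r \<in> R \<Longrightarrow> eval_word H f r = \<one>\<^bsub>H\<^esub>"
  obtains h where "h \<in> hom (abelianization (presented_group R)) H"
    and "\<And>a. h (derived (presented_group R) (carrier (presented_group R))
                  #>\<^bsub>presented_group R\<^esub> pres_gen R a) = f a"
proof -
  interpret G: group "presented_group R" by (rule group_presented_group)
  interpret H: comm_group H by fact
  obtain \<psi> where \<psi>: "\<psi> \<in> hom (presented_group R) H" and \<psi>_gen: "\<And>a. \<psi> (pres_gen R a) = f a"
    by (rule presented_group_universal[of H f R]) (use H.is_group f rel in auto)
  interpret \<psi>: group_hom "presented_group R" H \<psi>
    using \<psi> by (simp add: group_hom_def group_hom_axioms_def G.is_group H.is_group)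
  obtain h where "h \<in> hom (abelianization (presented_group R)) H"
    and "\<And>g. g \<in> carrier (presented_group R)
           \<Longrightarrow> h (derived (presented_group R) (carrier (presented_group R)) #>\<^bsub>presented_group R\<^esub> g)
             = \<psi> g"
    using \<psi>.FactGroup_universal_kernel[OF G.derived_self_is_normal
        \<psi>.derived_subset_kernel[OF \<open>comm_group H\<close>]] by blast
  with \<psi>_gen that show ?thesis
    by simp
qed

lemma carrier_presented_group_Mod_generate:
  assumes "N \<lhd> presented_group R"
  shows "carrier (presented_group R Mod N)
           = generate (presented_group R Mod N) (range (\<lambda>a. N #>\<^bsub>presented_group R\<^esub> pres_gen R a))"
  using normal.carrier_FactGroup_generate[OF assms carrier_presented_group_generate]
  by (simp add: image_image)

lemma normal_closure_quotient_iso_presented_group: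
  fixes R S T :: "'a word set"
  defines "G \<equiv> presented_group R" and "H \<equiv> presented_group S"
  defines "N \<equiv> normal_closure G (pres_word R ` T)"
  assumes RT: "\<And>r. r \<in> R \<union> T \<Longrightarrow> pres_word S r = \<one>\<^bsub>H\<^esub>"
    and S: "\<And>s. s \<in> S \<Longrightarrow> pres_word R s \<in> N"
  shows "\<exists>\<phi>. \<phi> \<in> iso (G Mod N) H \<and> (\<forall>a. \<phi> (N #>\<^bsub>G\<^esub> pres_gen R a) = pres_gen S a)"
proof -
  interpret G: group G unfolding G_def by (rule group_presented_group)
  interpret H: group H unfolding H_def by (rule group_presented_group)
  have "N \<lhd> G"
    unfolding N_def by (rule G.normal_closure_normal) (auto simp: G_def carrier_presented_group)
  then interpret N: normal N G .
  obtain \<phi> where \<phi>: "\<phi> \<in> hom (G Mod N) H" and \<phi>_gen: "\<And>a. \<phi> (N #>\<^bsub>G\<^esub> pres_gen R a) = pres_gen S a"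
    using presented_group_normal_closure_universal[where R=R and T=T and H=H and f="pres_gen S"] RT
    unfolding G_def H_def N_def by (auto simp: eval_word_presented_group group_presented_group)
  have relators_S: "eval_word (G Mod N) (\<lambda>a. N #>\<^bsub>G\<^esub> pres_gen R a) s = \<one>\<^bsub>G Mod N\<^esub>" if "s \<in> S" for s
    using eval_word_Mod_eq_one_iff[OF \<open>N \<lhd> G\<close>[unfolded G_def]] S[OF that] unfolding G_def by simp
  obtain \<chi> where \<chi>: "\<chi> \<in> hom H (G Mod N)" and \<chi>_gen: "\<And>a. \<chi> (pres_gen S a) = N #>\<^bsub>G\<^esub> pres_gen R a"
    by (rule presented_group_universal[of "G Mod N" "\<lambda>a. N #>\<^bsub>G\<^esub> pres_gen R a" S])
      (use N.factorgroup_is_group relators_S in \<open>auto simp: H_def G_def carrier_FactGroup\<close>)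
  have gen_G: "carrier (G Mod N) = generate (G Mod N) (range (\<lambda>a. N #>\<^bsub>G\<^esub> pres_gen R a))"
    using \<open>N \<lhd> G\<close> unfolding G_def by (rule carrier_presented_group_Mod_generate)
  have gen_H: "carrier H = generate H (range (pres_gen S))"
    unfolding H_def by (rule carrier_presented_group_generate)
  have "\<phi> \<in> iso (G Mod N) H"
    by (rule iso_if_inverse_on_generators[OF N.factorgroup_is_group H.is_group \<phi> \<chi> gen_G gen_H])
      (auto simp: \<phi>_gen \<chi>_gen)
  with \<phi>_gen show ?thesis
    by blast
qed

lemma abelianization_presented_group_hom:
  fixes R S :: "'a word set"
  defines "G \<equiv> presented_group R" and "H \<equiv> presented_group S"
  assumes R: "\<And>r. r \<in> R \<Longrightarrow> pres_word S r \<in> derived H (carrier H)"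
  obtains \<alpha> where "\<alpha> \<in> hom (abelianization G) (abelianization H)"
    and "\<And>a. \<alpha> (derived G (carrier G) #>\<^bsub>G\<^esub> pres_gen R a) = derived H (carrier H) #>\<^bsub>H\<^esub> pres_gen S a"
proof -
  interpret H: group H unfolding H_def by (rule group_presented_group)
  let ?f = "\<lambda>a. derived H (carrier H) #>\<^bsub>H\<^esub> pres_gen S a"
  have f: "?f a \<in> carrier (abelianization H)" for a
    by (auto simp: carrier_FactGroup H_def)
  have rel: "eval_word (abelianization H) ?f r = \<one>\<^bsub>abelianization H\<^esub>" if "r \<in> R" for r
    using eval_word_Mod_eq_one_iff[OF H.derived_self_is_normal[unfolded H_def]] R[OF that]
    unfolding H_def by simp
  obtain \<alpha> where "\<alpha> \<in> hom (abelianization (presented_group R)) (abelianization H)"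
    and "\<And>a. \<alpha> (derived (presented_group R) (carrier (presented_group R))
                 #>\<^bsub>presented_group R\<^esub> pres_gen R a) = ?f a"
    by (rule presented_group_abelianization_universal[where H="abelianization H" and f="?f" and R=R])
      (use H.derived_quot_is_comm_group f rel in auto)
  with that show ?thesis
    unfolding G_def by blast
qed

lemma abelianization_presented_group_iso:
  fixes R S :: "'a word set"
  defines "G \<equiv> presented_group R" and "H \<equiv> presented_group S"
  assumes "\<And>r. r \<in> R \<Longrightarrow> pres_word S r \<in> derived H (carrier H)"
    and "\<And>s. s \<in> S \<Longrightarrow> pres_word R s \<in> derived G (carrier G)"
  shows "abelianization G \<cong> abelianization H"
proof -
  interpret G: group G unfolding G_def by (rule group_presented_group)
  interpret H: group H unfolding H_def by (rule group_presented_group)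
  obtain \<alpha> where \<alpha>: "\<alpha> \<in> hom (abelianization G) (abelianization H)"
    and \<alpha>_gen: "\<And>a. \<alpha> (derived G (carrier G) #>\<^bsub>G\<^esub> pres_gen R a) = derived H (carrier H) #>\<^bsub>H\<^esub> pres_gen S a"
    using abelianization_presented_group_hom[where R=R and S=S] assms(3) unfolding G_def H_def by blast
  obtain \<beta> where \<beta>: "\<beta> \<in> hom (abelianization H) (abelianization G)"
    and \<beta>_gen: "\<And>a. \<beta> (derived H (carrier H) #>\<^bsub>H\<^esub> pres_gen S a) = derived G (carrier G) #>\<^bsub>G\<^esub> pres_gen R a"
    using abelianization_presented_group_hom[where R=S and S=R] assms(4) unfolding G_def H_def by blast
  have gen_G: "carrier (abelianization G)
      = generate (abelianization G) (range (\<lambda>a. derived G (carrier G) #>\<^bsub>G\<^esub> pres_gen R a))"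
    using G.derived_self_is_normal unfolding G_def by (rule carrier_presented_group_Mod_generate)
  have gen_H: "carrier (abelianization H)
      = generate (abelianization H) (range (\<lambda>a. derived H (carrier H) #>\<^bsub>H\<^esub> pres_gen S a))"
    using H.derived_self_is_normal unfolding H_def by (rule carrier_presented_group_Mod_generate)
  have "\<alpha> \<in> iso (abelianization G) (abelianization H)"
    by (rule iso_if_inverse_on_generators[OF G.derived_quot_is_group H.derived_quot_is_group
          \<alpha> \<beta> gen_G gen_H])
      (auto simp: \<alpha>_gen \<beta>_gen)
  then show ?thesis
    by (rule is_isoI)
qed

section \<open>The relators of P_n and Q_4n\<close>

definition power_relator :: "nat \<Rightarrow> gen word" where
  "power_relator n = pow_word GX (int n) @ pow_word GY (-2)"

definition twist_relator :: "gen word" where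
  "twist_relator = xw @ yw @ xw @ yinvw"

definition block_word :: "int \<times> int \<Rightarrow> gen word" where
  "block_word = (\<lambda>(a, b). pow_word GX a @ yw @ pow_word GX b @ yinvw)"

definition product_relator :: "int list \<Rightarrow> int list \<Rightarrow> gen word" where
  "product_relator ns ms =
     concat (map block_word (zip (ns @ [1 - sum_list ns]) (ms @ [1 - sum_list ms])))"

lemma P_rels_eq: "P_rels n ns ms = {power_relator n, product_relator ns ms}"
  by (simp add: P_rels_def power_relator_def product_relator_def block_word_def)

lemma Q_rels_eq: "Q_rels n = {power_relator n, twist_relator}"
  by (simp add: Q_rels_def power_relator_def twist_relator_def)

lemma sum_list_zip_linear:
  fixes xs ys :: "int list"
  assumes "length xs = length ys"
  shows "(\<Sum>p\<leftarrow>zip xs ys. fst p + e * snd p) = sum_list xs + e * sum_list ys"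
  using assms by (induction xs ys rule: list_induct2) (simp_all add: algebra_simps)

context group
begin

lemma eval_twist_relator:
  assumes "\<And>a. f a \<in> carrier G"
  shows "eval_word G f twist_relator = f GX \<otimes> (f GY \<otimes> f GX \<otimes> inv f GY)"
  using assms by (simp add: twist_relator_def xw_def yw_def yinvw_def m_assoc)

lemma eval_product_relator:
  fixes e :: int
  assumes f: "\<And>a. f a \<in> carrier G" and conj: "f GY \<otimes> f GX \<otimes> inv f GY = f GX [^] e"
    and "length ms = length ns"
  shows "eval_word G f (product_relator ns ms) = f GX [^] (1 + e)"
proof -
  let ?x = "f GX" and ?y = "f GY"
  have x: "?x \<in> carrier G" and y: "?y \<in> carrier G"
    using f by auto
  have conj_hom: "(\<lambda>z. ?y \<otimes> z \<otimes> inv ?y) \<in> hom G G"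
    using y by (intro homI) (simp_all add: m_assoc inv_solve_left)
  have conj_pow: "?y \<otimes> ?x [^] b \<otimes> inv ?y = ?x [^] (e * b)" for b :: int
  proof -
    have "?y \<otimes> ?x [^] b \<otimes> inv ?y = (?y \<otimes> ?x \<otimes> inv ?y) [^] b"
      using hom_int_pow[OF conj_hom x is_group is_group] by simp
    then show ?thesis
      using x by (simp add: conj int_pow_pow)
  qed
  have block: "eval_word G f (block_word p) = ?x [^] (fst p + e * snd p)" for p
    using x y conj_pow[of "snd p"]
    by (cases p) (simp add: block_word_def yw_def yinvw_def eval_word_append[OF f]
        eval_word_pow_word int_pow_mult m_assoc)
  have blocks: "eval_word G f (concat (map block_word zs)) = ?x [^] (\<Sum>p\<leftarrow>zs. fst p + e * snd p)"
    for zs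
    using x by (induction zs) (simp_all add: eval_word_append[OF f] block int_pow_mult)
  have "(\<Sum>p\<leftarrow>zip (ns @ [1 - sum_list ns]) (ms @ [1 - sum_list ms]). fst p + e * snd p) = 1 + e"
    using assms(3) by (subst sum_list_zip_linear) (simp_all add: algebra_simps)
  then show ?thesis
    unfolding product_relator_def blocks by simp
qed

lemma eval_product_relator_eq_one:
  assumes f: "\<And>a. f a \<in> carrier G" and "eval_word G f twist_relator = \<one>"
    and "length ms = length ns"
  shows "eval_word G f (product_relator ns ms) = \<one>"
proof -
  have "f GX \<otimes> (f GY \<otimes> f GX \<otimes> inv f GY) = \<one>"
    using assms eval_twist_relator by simp
  then have "f GY \<otimes> f GX \<otimes> inv f GY = f GX [^] (- 1 :: int)"
    using f by (simp add: int_pow_neg inv_equality[symmetric] inv_comm)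
  then have "eval_word G f (product_relator ns ms) = f GX [^] (1 + - 1 :: int)"
    using eval_product_relator f assms(3) by blast
  then show ?thesis
    by simp
qed

end

lemma (in comm_group) eval_product_relator_eq_twist:
  assumes f: "\<And>a. f a \<in> carrier G" and "length ms = length ns"
  shows "eval_word G f (product_relator ns ms) = eval_word G f twist_relator"
proof -
  have "f GY \<otimes> f GX \<otimes> inv f GY = f GX [^] (1 :: int)"
    using f by (simp add: m_comm[of "f GY" "f GX"] m_assoc)
  then have "eval_word G f (product_relator ns ms) = f GX [^] (1 + 1 :: int)"
    using eval_product_relator f assms(2) by blast
  also have "\<dots> = f GX \<otimes> f GX"
    using f int_pow_mult[of "f GX" 1 1] by simp
  also have "\<dots> = eval_word G f twist_relator"
    using f by (simp add: eval_twist_relator m_comm[of "f GY" "f GX"] m_assoc)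
  finally show ?thesis .
qed

lemma pres_word_product_relator_in_derived_iff:
  fixes R :: "gen word set"
  defines "G \<equiv> presented_group R"
  assumes "length ms = length ns"
  shows "pres_word R (product_relator ns ms) \<in> derived G (carrier G)
           \<longleftrightarrow> pres_word R twist_relator \<in> derived G (carrier G)"
proof -
  interpret G: group G unfolding G_def by (rule group_presented_group)
  interpret A: comm_group "abelianization G" by (rule G.derived_quot_is_comm_group)
  let ?f = "\<lambda>a. derived G (carrier G) #>\<^bsub>G\<^esub> pres_gen R a"
  have f: "?f a \<in> carrier (abelianization G)" for a
    by (auto simp: carrier_FactGroup G_def)
  have eq: "eval_word (abelianization G) ?f (product_relator ns ms)
      = eval_word (abelianization G) ?f twist_relator"
    using A.eval_product_relator_eq_twist[where f="?f", OF f assms(2)] .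
  have iff: "eval_word (abelianization G) ?f w = \<one>\<^bsub>abelianization G\<^esub>
      \<longleftrightarrow> pres_word R w \<in> derived G (carrier G)" for w
    using G.derived_self_is_normal unfolding G_def by (rule eval_word_Mod_eq_one_iff)
  show ?thesis
    by (simp only: iff[symmetric] eq)
qed

lemma P_rels_Mod_twist_iso_Q_rels:
  fixes n :: nat and ns ms :: "int list"
  defines "G \<equiv> presented_group (P_rels n ns ms)"
  defines "N \<equiv> normal_closure G {pres_word (P_rels n ns ms) twist_relator}"
  assumes "length ms = length ns"
  shows "\<exists>\<phi>. \<phi> \<in> iso (G Mod N) (presented_group (Q_rels n))
             \<and> (\<forall>a. \<phi> (N #>\<^bsub>G\<^esub> pres_gen (P_rels n ns ms) a) = pres_gen (Q_rels n) a)"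
proof -
  interpret Q: group "presented_group (Q_rels n)" by (rule group_presented_group)
  have twist_Q: "pres_word (Q_rels n) twist_relator = \<one>\<^bsub>presented_group (Q_rels n)\<^esub>"
    by (rule pres_word_relator) (simp add: Q_rels_eq)
  have "pres_word (Q_rels n) r = \<one>\<^bsub>presented_group (Q_rels n)\<^esub>"
    if "r \<in> P_rels n ns ms \<union> {twist_relator}" for r
    using that twist_Q Q.eval_product_relator_eq_one[of "pres_gen (Q_rels n)"] assms(3)
    by (auto simp: P_rels_eq pres_word_relator Q_rels_eq eval_word_presented_group)
  moreover have "pres_word (P_rels n ns ms) s \<in> N" if "s \<in> Q_rels n" for s
  proof -
    interpret G: group G unfolding G_def by (rule group_presented_group)
    have "pres_word (P_rels n ns ms) (power_relator n) = \<one>\<^bsub>G\<^esub>"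
      unfolding G_def by (rule pres_word_relator) (simp add: P_rels_eq)
    moreover have "\<one>\<^bsub>G\<^esub> \<in> N"
      unfolding N_def normal_closure_def by (rule generate.one)
    moreover have "pres_word (P_rels n ns ms) twist_relator \<in> N"
      using G.subset_normal_closure[of "{pres_word (P_rels n ns ms) twist_relator}"]
      unfolding N_def by (simp add: G_def carrier_presented_group)
    ultimately show ?thesis
      using that by (auto simp: Q_rels_eq)
  qed
  ultimately show ?thesis
    using normal_closure_quotient_iso_presented_group[of "P_rels n ns ms" "{twist_relator}" "Q_rels n"]
    unfolding G_def N_def by simp
qed

lemma abelianization_P_rels_iso_Q_rels:
  assumes "length ms = length ns"
  shows "abelianization (presented_group (P_rels n ns ms)) \<cong> abelianization (presented_group (Q_rels n))"
proof (rule abelianization_presented_group_iso)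
  have relator_in_derived: "pres_word R r \<in> derived (presented_group R) (carrier (presented_group R))"
    if "r \<in> R" for R :: "gen word set" and r
    unfolding pres_word_relator[OF that] derived_def by (rule generate.one)
  show "pres_word (Q_rels n) r \<in> derived (presented_group (Q_rels n)) (carrier (presented_group (Q_rels n)))"
    if "r \<in> P_rels n ns ms" for r
  proof -
    have twist: "pres_word (Q_rels n) twist_relator
        \<in> derived (presented_group (Q_rels n)) (carrier (presented_group (Q_rels n)))"
      by (rule relator_in_derived) (simp add: Q_rels_eq)
    from that consider "r = power_relator n" | "r = product_relator ns ms"
      by (auto simp: P_rels_eq)
    then show ?thesis
    proof cases
      case 1
      then show ?thesis by (simp add: relator_in_derived Q_rels_eq)
    next
      case 2
      with twist show ?thesis by (simp add: pres_word_product_relator_in_derived_iff[OF assms])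
    qed
  qed
  show "pres_word (P_rels n ns ms) s
      \<in> derived (presented_group (P_rels n ns ms)) (carrier (presented_group (P_rels n ns ms)))"
    if "s \<in> Q_rels n" for s
  proof -
    have product: "pres_word (P_rels n ns ms) (product_relator ns ms)
        \<in> derived (presented_group (P_rels n ns ms)) (carrier (presented_group (P_rels n ns ms)))"
      by (rule relator_in_derived) (simp add: P_rels_eq)
    from that consider "s = power_relator n" | "s = twist_relator"
      by (auto simp: Q_rels_eq)
    then show ?thesis
    proof cases
      case 1
      then show ?thesis by (simp add: relator_in_derived P_rels_eq)
    next
      case 2
      with product show ?thesis by (simp add: pres_word_product_relator_in_derived_iff[OF assms])
    qed
  qed
qed

theorem proposition3p7:
  fixes n :: nat and ns ms :: "int list"
  assumes "n \<ge> 2" and "length ns \<ge> 1" and "length ms = length ns"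
    and "0 \<notin> set ns" and "0 \<notin> set ms"
  defines "G \<equiv> presented_group (P_rels n ns ms)"
    and "Q \<equiv> presented_group (Q_rels n)"
  defines "N \<equiv> normal_closure G {pres_word (P_rels n ns ms) (xw @ yw @ xw @ yinvw)}"
  shows "(\<exists>\<phi>. \<phi> \<in> iso (G Mod N) Q
            \<and> \<phi> (N #>\<^bsub>G\<^esub> pres_word (P_rels n ns ms) xw) = pres_word (Q_rels n) xw
            \<and> \<phi> (N #>\<^bsub>G\<^esub> pres_word (P_rels n ns ms) yw) = pres_word (Q_rels n) yw)
       \<and> (G Mod derived G (carrier G)) \<cong> (Q Mod derived Q (carrier Q))"
proof -
  have twist: "xw @ yw @ xw @ yinvw = twist_relator"
    by (simp add: twist_relator_def)
  obtain \<phi> where "\<phi> \<in> iso (G Mod N) Q"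
    and \<phi>_gen: "\<And>a. \<phi> (N #>\<^bsub>G\<^esub> pres_gen (P_rels n ns ms) a) = pres_gen (Q_rels n) a"
    using P_rels_Mod_twist_iso_Q_rels[OF assms(3)] unfolding G_def Q_def N_def twist by blast
  moreover have "pres_word R xw = pres_gen R GX" and "pres_word R yw = pres_gen R GY" for R
    by (simp_all add: pres_gen_def xw_def yw_def)
  ultimately show ?thesis
    using abelianization_P_rels_iso_Q_rels[OF assms(3), where n=n, folded G_def Q_def] by auto
qed

end
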